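(* Let $\mathscr H$ be a complex Hilbert space and $\mathbf{T}=(T_1,\dots,T_d)\in\mathbb{B}(\mathscr H)^d$ with $\|\mathbf{T}\|\neq 0$. Then $$\frac{1}{2\sqrt{d}}\Big(\|\mathbf{T}\|+\frac{c_e(\mathbf{T}^2)}{\|\mathbf{T}\|}\Big)\le w_e(\mathbf{T}).$$
   Context: $\mathbb{B}(\mathscr H)$ denotes the bounded linear operators on $\mathscr H$. For $\mathbf{T}=(T_1,\dots,T_d)\in\mathbb{B}(\mathscr H)^d$: the Euclidean operator radius is $w_e(\mathbf{T})=\sup\{(\sum_{k=1}^d|\langle T_kx,x\rangle|^2)^{1/2}: \|x\|=1\}$; the joint Crawford number is $c_e(\mathbf{T})=\inf\{(\sum_{k=1}^d|\langle T_kx,x\rangle|^2)^{1/2}: \|x\|=1\}$; the joint operator norm is $\|\mathbf{T}\|=\sup\{(\sum_{k=1}^d\|T_kx\|^2)^{1/2}: \|x\|=1\}$. Powers are componentwise: $\mathbf{T}^2=(T_1^2,\dots,T_d^2)$. *)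

theory Defs
  imports "HOL-Analysis.Analysis"
begin

class complex_hilbert = real_normed_vector + complete_space +
  fixes scaleC :: "complex \<Rightarrow> 'a \<Rightarrow> 'a"
    and cinner :: "'a \<Rightarrow> 'a \<Rightarrow> complex"
  assumes scaleC_add_right: "scaleC a (x + y) = scaleC a x + scaleC a y"
    and scaleC_add_left: "scaleC (a + b) x = scaleC a x + scaleC b x"
    and scaleC_scaleC: "scaleC a (scaleC b x) = scaleC (a * b) x"
    and scaleC_one: "scaleC 1 x = x"
    and scaleR_scaleC: "scaleR r x = scaleC (complex_of_real r) x"
    and cinner_commute: "cinner x y = cnj (cinner y x)"
    and cinner_add_left: "cinner (x + y) z = cinner x z + cinner y z"
    and cinner_scaleC_left: "cinner (scaleC a x) y = a * cinner x y"
    and cinner_self_real: "Im (cinner x x) = 0"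
    and cinner_self_nonneg: "0 \<le> Re (cinner x x)"
    and cinner_self_eq_zero: "cinner x x = 0 \<longleftrightarrow> x = 0"
    and norm_eq_sqrt_cinner: "norm x = sqrt (Re (cinner x x))"

definition bounded_clinear_op :: "('a::complex_hilbert \<Rightarrow> 'a) \<Rightarrow> bool" where
  "bounded_clinear_op T \<longleftrightarrow>
     (\<forall>x y. T (x + y) = T x + T y) \<and>
     (\<forall>c x. T (scaleC c x) = scaleC c (T x)) \<and>
     (\<exists>K. \<forall>x. norm (T x) \<le> norm x * K)"

text \<open>A d-tuple of operators is a function on the indices 0..d-1.\<close>

definition euclid_op_radius :: "nat \<Rightarrow> (nat \<Rightarrow> 'a::complex_hilbert \<Rightarrow> 'a) \<Rightarrow> real" where
  "euclid_op_radius d T =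
     (SUP x\<in>{x::'a. norm x = 1}. sqrt (\<Sum>k<d. (cmod (cinner (T k x) x))\<^sup>2))"

definition joint_crawford :: "nat \<Rightarrow> (nat \<Rightarrow> 'a::complex_hilbert \<Rightarrow> 'a) \<Rightarrow> real" where
  "joint_crawford d T =
     (INF x\<in>{x::'a. norm x = 1}. sqrt (\<Sum>k<d. (cmod (cinner (T k x) x))\<^sup>2))"

definition joint_op_norm :: "nat \<Rightarrow> (nat \<Rightarrow> 'a::complex_hilbert \<Rightarrow> 'a) \<Rightarrow> real" where
  "joint_op_norm d T =
     (SUP x\<in>{x::'a. norm x = 1}. sqrt (\<Sum>k<d. (norm (T k x))\<^sup>2))"

definition op_tuple_sq :: "(nat \<Rightarrow> 'a \<Rightarrow> 'a) \<Rightarrow> nat \<Rightarrow> 'a \<Rightarrow> 'a" where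
  "op_tuple_sq T = (\<lambda>k. T k \<circ> T k)"

end

theory Submission
  imports Defs
begin

text \<open>Fix a unit vector \<open>x\<close> and write \<open>y = T\<^sub>k x\<close>, \<open>w = w\<^sub>e(T)\<close>, so that
  \<open>|\<langle>T\<^sub>k u, u\<rangle>| \<le> w \<parallel>u\<parallel>\<^sup>2\<close> for all \<open>u\<close>. Expanding,
  \<open>\<langle>T\<^sub>k(x + s y), x + s y\<rangle> - \<langle>T\<^sub>k(x - s y), x - s y\<rangle> = 2 (s\<^sup>* \<parallel>y\<parallel>\<^sup>2 + s \<langle>T\<^sub>k\<^sup>2 x, x\<rangle>)\<close>;
  bounding both terms by \<open>w\<close>, using the parallelogram law, and rotating \<open>s\<close> of modulus \<open>r\<close>
  so that both summands on the right become nonnegative gives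
  \<open>r (\<parallel>T\<^sub>k x\<parallel>\<^sup>2 + |\<langle>T\<^sub>k\<^sup>2 x, x\<rangle>|) \<le> w (1 + r\<^sup>2 \<parallel>T\<^sub>k x\<parallel>\<^sup>2)\<close>. Summing over \<open>k\<close>,
  \<open>r (\<parallel>T x\<parallel>\<^sup>2 + c\<^sub>e(T\<^sup>2)) \<le> w (d + r\<^sup>2 \<parallel>T x\<parallel>\<^sup>2)\<close>. This is affine in \<open>\<parallel>T x\<parallel>\<^sup>2\<close>, so it
  survives replacing \<open>\<parallel>T x\<parallel>\<close> by its supremum \<open>\<parallel>T\<parallel>\<close>, and \<open>r = \<surd>d / \<parallel>T\<parallel>\<close> gives the theorem.\<close>

lemma le_mult_SUP_power2:
  fixes f :: "'b \<Rightarrow> real"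
  assumes "S \<noteq> {}" and bdd: "bdd_above (f ` S)" and nonneg: "\<And>x. x \<in> S \<Longrightarrow> 0 \<le> f x"
    and le: "\<And>x. x \<in> S \<Longrightarrow> C \<le> k * (f x)\<^sup>2"
  shows "C \<le> k * (SUP x\<in>S. f x)\<^sup>2"
proof -
  obtain x0 where x0: "x0 \<in> S" using assms(1) by blast
  have f_le_SUP: "f x \<le> (SUP x\<in>S. f x)" if "x \<in> S" for x
    using that bdd by (rule cSUP_upper)
  show ?thesis
  proof (cases "k \<ge> 0")
    case True
    have "(f x0)\<^sup>2 \<le> (SUP x\<in>S. f x)\<^sup>2"
      using f_le_SUP [OF x0] nonneg [OF x0] by (rule power_mono)
    then show ?thesis using le [OF x0] True by (meson mult_left_mono order_trans)
  next
    case False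
    have sq_le: "(f x)\<^sup>2 \<le> C / k" if "x \<in> S" for x
      using le [OF that] False by (simp add: neg_le_divide_eq mult.commute)
    have "0 \<le> C / k" using sq_le [OF x0] by (meson order_trans zero_le_power2)
    have "(SUP x\<in>S. f x) \<le> sqrt (C / k)"
      using assms(1) by (rule cSUP_least) (simp add: real_le_rsqrt sq_le)
    then have "(SUP x\<in>S. f x)\<^sup>2 \<le> C / k"
      using f_le_SUP [OF x0] nonneg [OF x0] \<open>0 \<le> C / k\<close>
      by (metis order_trans power_mono real_sqrt_pow2)
    then show ?thesis using False by (simp add: neg_le_divide_eq mult.commute)
  qed
qed

lemma unit_sphere_nonempty:
  assumes "\<exists>x::'a::real_normed_vector. x \<noteq> 0"
  shows "{x::'a. norm x = 1} \<noteq> {}"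
proof -
  obtain x :: 'a where "x \<noteq> 0" using assms by blast
  then have "norm (x /\<^sub>R norm x) = 1" by simp
  then show ?thesis by blast
qed

lemma cinner_add_right: "cinner (x::'a::complex_hilbert) (y + z) = cinner x y + cinner x z"
  by (metis cinner_commute cinner_add_left complex_cnj_add)

lemma cinner_scaleC_right: "cinner (x::'a::complex_hilbert) (scaleC a y) = cnj a * cinner x y"
  by (metis cinner_commute cinner_scaleC_left complex_cnj_mult)

lemma cinner_zero_left [simp]: "cinner (0::'a::complex_hilbert) y = 0"
  using cinner_add_left [of "0::'a" 0 y] by simp

lemma cinner_zero_right [simp]: "cinner (y::'a::complex_hilbert) 0 = 0"
  by (metis cinner_commute cinner_zero_left complex_cnj_zero)

lemma cinner_self_eq_norm_power2: "cinner (x::'a::complex_hilbert) x = of_real ((norm x)\<^sup>2)"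
proof -
  have "(norm x)\<^sup>2 = Re (cinner x x)"
    using norm_eq_sqrt_cinner [of x] cinner_self_nonneg [of x] by simp
  then show ?thesis using cinner_self_real [of x] by (simp add: complex_eq_iff)
qed

lemma cinner_add_scaleC_add_scaleC:
  "cinner ((x::'a::complex_hilbert) + scaleC s y) (z + scaleC t u)
     = cinner x z + cnj t * cinner x u + s * cinner y z + s * cnj t * cinner y u"
  by (simp add: cinner_add_left cinner_add_right cinner_scaleC_left cinner_scaleC_right
      algebra_simps)

lemma norm_scaleC: "norm (scaleC a (x::'a::complex_hilbert)) = cmod a * norm x"
proof -
  have "cinner (scaleC a x) (scaleC a x) = a * cnj a * cinner x x"
    by (simp add: cinner_scaleC_left cinner_scaleC_right mult.assoc)
  then have "of_real ((norm (scaleC a x))\<^sup>2) = a * cnj a * of_real ((norm x)\<^sup>2)"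
    by (simp only: cinner_self_eq_norm_power2)
  also have "\<dots> = of_real ((cmod a * norm x)\<^sup>2)"
    by (simp only: complex_norm_square [symmetric] power_mult_distrib of_real_mult)
  finally show ?thesis by (simp add: power2_eq_iff_nonneg del: of_real_power)
qed

lemma cmod_cinner_le_norm_mult: "cmod (cinner (x::'a::complex_hilbert) y) \<le> norm x * norm y"
proof (cases "y = 0")
  case True
  then show ?thesis by simp
next
  case False
  define t where "t = cinner x y / cinner y y"
  have ny: "norm y > 0" using False by simp
  have "0 \<le> Re (cinner (x + scaleC (-t) y) (x + scaleC (-t) y))"
    by (rule cinner_self_nonneg)
  also have "cinner (x + scaleC (-t) y) (x + scaleC (-t) y)
      = cinner x x - cnj t * cinner x y - t * cinner y x + t * cnj t * cinner y y"
    by (simp add: cinner_add_scaleC_add_scaleC)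
  also have "\<dots> = of_real ((norm x)\<^sup>2 - (cmod (cinner x y))\<^sup>2 / (norm y)\<^sup>2)"
    using ny unfolding t_def cinner_self_eq_norm_power2 [of y] cinner_self_eq_norm_power2 [of x]
      cinner_commute [of y x]
    by (simp add: field_simps complex_norm_square [symmetric] power2_eq_square)
  finally have "(cmod (cinner x y))\<^sup>2 \<le> (norm x * norm y)\<^sup>2"
    using ny by (simp add: field_simps power_mult_distrib)
  then show ?thesis by (rule power2_le_imp_le) simp
qed

lemma parallelogram_scaleC:
  "(norm ((x::'a::complex_hilbert) + scaleC s y))\<^sup>2 + (norm (x + scaleC (-s) y))\<^sup>2
     = 2 * (norm x)\<^sup>2 + 2 * (cmod s)\<^sup>2 * (norm y)\<^sup>2"
proof -
  have "of_real ((norm (x + scaleC s y))\<^sup>2 + (norm (x + scaleC (-s) y))\<^sup>2)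
      = 2 * of_real ((norm x)\<^sup>2) + 2 * (s * cnj s) * of_real ((norm y)\<^sup>2)"
    by (simp only: of_real_add cinner_self_eq_norm_power2 [symmetric]
        cinner_add_scaleC_add_scaleC) (simp add: algebra_simps)
  also have "\<dots> = of_real (2 * (norm x)\<^sup>2 + 2 * (cmod s)\<^sup>2 * (norm y)\<^sup>2)"
    by (simp add: complex_norm_square [symmetric])
  finally show ?thesis by (simp only: of_real_eq_iff)
qed

lemma cinner_apply_add_scaleC_diff:
  fixes T :: "'a::complex_hilbert \<Rightarrow> 'a"
  assumes "\<forall>x y. T (x + y) = T x + T y" and "\<forall>c x. T (scaleC c x) = scaleC c (T x)"
  shows "cinner (T (x + scaleC s y)) (x + scaleC s y)
           - cinner (T (x + scaleC (-s) y)) (x + scaleC (-s) y)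
         = 2 * (cnj s * cinner (T x) y + s * cinner (T y) x)"
  using assms by (simp add: cinner_add_scaleC_add_scaleC algebra_simps)

lemma cmod_cinner_apply_le_norm_power2:
  fixes T :: "'a::complex_hilbert \<Rightarrow> 'a"
  assumes "\<forall>x y. T (x + y) = T x + T y" and "\<forall>c x. T (scaleC c x) = scaleC c (T x)"
    and unit: "\<And>v. norm v = 1 \<Longrightarrow> cmod (cinner (T v) v) \<le> w"
  shows "cmod (cinner (T u) u) \<le> w * (norm u)\<^sup>2"
proof (cases "u = 0")
  case True
  have "T 0 = 0" using assms(1) by (metis add_cancel_right_right)
  then show ?thesis using True by simp
next
  case False
  define v where "v = scaleC (of_real (1 / norm u)) u"
  have "norm v = 1" using False by (simp add: v_def norm_scaleC norm_divide)
  moreover have "cmod (cinner (T v) v) = cmod (cinner (T u) u) / (norm u)\<^sup>2"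
    using assms(2)
    by (simp add: v_def cinner_scaleC_left cinner_scaleC_right norm_divide norm_mult
        power2_eq_square)
  ultimately have "cmod (cinner (T u) u) / (norm u)\<^sup>2 \<le> w" using unit by metis
  then show ?thesis using False by (simp add: divide_le_eq mult.commute)
qed

lemma exists_unimodular_rotation_to_cmod:
  "\<exists>\<sigma>::complex. cmod \<sigma> = 1 \<and> \<sigma> * \<sigma> * \<beta> = of_real (cmod \<beta>)"
proof (cases "\<beta> = 0")
  case True
  then show ?thesis by (intro exI [of _ 1]) simp
next
  case False
  define \<sigma> where "\<sigma> = csqrt (cnj \<beta> / of_real (cmod \<beta>))"
  have "\<sigma> * \<sigma> = cnj \<beta> / of_real (cmod \<beta>)"
    unfolding \<sigma>_def by (metis power2_csqrt power2_eq_square)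
  then have "\<sigma> * \<sigma> * \<beta> = (\<beta> * cnj \<beta>) / of_real (cmod \<beta>)" by simp
  also have "\<dots> = of_real (cmod \<beta>)"
    using False by (simp add: complex_norm_square [symmetric] power2_eq_square)
  finally have "\<sigma> * \<sigma> * \<beta> = of_real (cmod \<beta>)" .
  moreover have "cmod \<sigma> = 1" using False by (simp add: \<sigma>_def norm_divide)
  ultimately show ?thesis by blast
qed

lemma norm_power2_add_cmod_cinner_square_le:
  fixes T :: "'a::complex_hilbert \<Rightarrow> 'a"
  assumes lin: "\<forall>x y. T (x + y) = T x + T y" "\<forall>c x. T (scaleC c x) = scaleC c (T x)"
    and w: "\<And>u. cmod (cinner (T u) u) \<le> w * (norm u)\<^sup>2" and r: "r > 0"
  shows "r * ((norm (T x))\<^sup>2 + cmod (cinner (T (T x)) x))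
           \<le> w * ((norm x)\<^sup>2 + r\<^sup>2 * (norm (T x))\<^sup>2)"
proof -
  define \<beta> where "\<beta> = cinner (T (T x)) x"
  obtain \<sigma> where \<sigma>: "cmod \<sigma> = 1" "\<sigma> * \<sigma> * \<beta> = of_real (cmod \<beta>)"
    using exists_unimodular_rotation_to_cmod by blast
  define s where "s = of_real r * \<sigma>"
  define f where "f = (\<lambda>t. cinner (T (x + scaleC t (T x))) (x + scaleC t (T x)))"
  have "\<sigma> * (f s - f (-s))
      = 2 * of_real r * ((\<sigma> * cnj \<sigma>) * of_real ((norm (T x))\<^sup>2) + \<sigma> * \<sigma> * \<beta>)"
    unfolding f_def cinner_apply_add_scaleC_diff [OF lin] \<beta>_def
    by (simp add: s_def cinner_self_eq_norm_power2 algebra_simps)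
  also have "\<dots> = of_real (2 * r * ((norm (T x))\<^sup>2 + cmod \<beta>))"
    by (simp add: \<sigma> complex_norm_square [symmetric])
  finally have rotated_diff:
    "\<sigma> * (f s - f (-s)) = of_real (2 * r * ((norm (T x))\<^sup>2 + cmod \<beta>))" .
  have "2 * r * ((norm (T x))\<^sup>2 + cmod \<beta>) = cmod (\<sigma> * (f s - f (-s)))"
    unfolding rotated_diff norm_of_real using r by simp
  also have "\<dots> = cmod (f s - f (-s))" by (simp add: norm_mult \<sigma>(1))
  also have "\<dots> \<le> cmod (f s) + cmod (f (-s))" by (rule norm_triangle_ineq4)
  also have "\<dots> \<le> w * ((norm (x + scaleC s (T x)))\<^sup>2 + (norm (x + scaleC (-s) (T x)))\<^sup>2)"
    unfolding f_def distrib_left by (intro add_mono w)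
  also have "\<dots> = 2 * w * ((norm x)\<^sup>2 + r\<^sup>2 * (norm (T x))\<^sup>2)"
    using \<sigma>(1) r by (simp add: parallelogram_scaleC s_def norm_mult algebra_simps)
  finally show ?thesis by (simp add: \<beta>_def)
qed

definition joint_norm_at :: "nat \<Rightarrow> (nat \<Rightarrow> 'a::complex_hilbert \<Rightarrow> 'a) \<Rightarrow> 'a \<Rightarrow> real" where
  "joint_norm_at d T x = sqrt (\<Sum>k<d. (norm (T k x))\<^sup>2)"

definition joint_numerical_at :: "nat \<Rightarrow> (nat \<Rightarrow> 'a::complex_hilbert \<Rightarrow> 'a) \<Rightarrow> 'a \<Rightarrow> real" where
  "joint_numerical_at d T x = sqrt (\<Sum>k<d. (cmod (cinner (T k x) x))\<^sup>2)"

lemma joint_op_norm_eq_SUP: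
  "joint_op_norm d T = (SUP x\<in>{x. norm x = 1}. joint_norm_at d T x)"
  unfolding joint_op_norm_def joint_norm_at_def ..

lemma euclid_op_radius_eq_SUP:
  "euclid_op_radius d T = (SUP x\<in>{x. norm x = 1}. joint_numerical_at d T x)"
  unfolding euclid_op_radius_def joint_numerical_at_def ..

lemma joint_crawford_eq_INF:
  "joint_crawford d T = (INF x\<in>{x. norm x = 1}. joint_numerical_at d T x)"
  unfolding joint_crawford_def joint_numerical_at_def ..

lemma joint_norm_at_nonneg: "0 \<le> joint_norm_at d T x"
  by (simp add: joint_norm_at_def sum_nonneg)

lemma joint_norm_at_power2: "(joint_norm_at d T x)\<^sup>2 = (\<Sum>k<d. (norm (T k x))\<^sup>2)"
  by (simp add: joint_norm_at_def sum_nonneg)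

lemma joint_numerical_at_le_joint_norm_at:
  "norm x = 1 \<Longrightarrow> joint_numerical_at d T x \<le> joint_norm_at d T x"
  unfolding joint_numerical_at_def joint_norm_at_def
  by (intro real_sqrt_le_mono sum_mono power_mono)
    (metis cmod_cinner_le_norm_mult mult.right_neutral, simp)

lemma cmod_cinner_le_joint_numerical_at:
  "k < d \<Longrightarrow> cmod (cinner (T k x) x) \<le> joint_numerical_at d T x"
  using member_le_L2_set [of "{..<d}" k "\<lambda>k. cmod (cinner (T k x) x)"]
  by (simp add: joint_numerical_at_def L2_set_def)

lemma bdd_above_joint_norm_at:
  assumes "\<forall>k<d. bounded_clinear_op (T k)"
  shows "bdd_above (joint_norm_at d T ` {x. norm x = 1})"
proof -
  obtain K where K: "\<And>k x. k < d \<Longrightarrow> norm (T k x) \<le> norm x * K k"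
    using assms unfolding bounded_clinear_op_def by metis
  show ?thesis
  proof (rule bdd_aboveI2)
    fix x :: 'a
    assume "x \<in> {x. norm x = 1}"
    then have "norm (T k x) \<le> K k" if "k < d" for k
      using K [OF that, of x] by simp
    then show "joint_norm_at d T x \<le> sqrt (\<Sum>k<d. (K k)\<^sup>2)"
      unfolding joint_norm_at_def by (intro real_sqrt_le_mono sum_mono power_mono) auto
  qed
qed

lemma cmod_cinner_le_euclid_op_radius:
  assumes ops: "\<forall>k<d. bounded_clinear_op (T k)" and "k < d"
  shows "cmod (cinner (T k u) u) \<le> euclid_op_radius d T * (norm u)\<^sup>2"
proof (rule cmod_cinner_apply_le_norm_power2)
  show "\<forall>x y. T k (x + y) = T k x + T k y" "\<forall>c x. T k (scaleC c x) = scaleC c (T k x)"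
    using ops \<open>k < d\<close> by (simp_all add: bounded_clinear_op_def)
  obtain M where M: "\<And>x. norm x = 1 \<Longrightarrow> joint_norm_at d T x \<le> M"
    using bdd_above_joint_norm_at [OF ops] by (auto simp: bdd_above_def)
  have "bdd_above (joint_numerical_at d T ` {x. norm x = 1})"
    by (rule bdd_aboveI2 [of _ _ M])
      (use M joint_numerical_at_le_joint_norm_at in \<open>fastforce intro: order_trans\<close>)
  then show "cmod (cinner (T k v) v) \<le> euclid_op_radius d T" if "norm v = 1" for v
    unfolding euclid_op_radius_eq_SUP using that \<open>k < d\<close>
    by (intro cSUP_upper2 [where x = v] cmod_cinner_le_joint_numerical_at) auto
qed

lemma joint_crawford_le_sum_cmod_cinner:
  "norm x = 1 \<Longrightarrow> joint_crawford d T \<le> (\<Sum>k<d. cmod (cinner (T k x) x))"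
  unfolding joint_crawford_eq_INF
  by (rule cINF_lower2 [where x = x], rule bdd_belowI2 [of _ 0])
    (auto simp: joint_numerical_at_def L2_set_def [symmetric] L2_set_le_sum)

lemma joint_norm_at_crawford_le_euclid_op_radius:
  assumes ops: "\<forall>k<d. bounded_clinear_op (T k)" and x: "norm x = 1" and r: "r > 0"
  shows "r * ((joint_norm_at d T x)\<^sup>2 + joint_crawford d (op_tuple_sq T))
           \<le> euclid_op_radius d T * (real d + r\<^sup>2 * (joint_norm_at d T x)\<^sup>2)"
proof -
  define w where "w = euclid_op_radius d T"
  have per_operator: "r * ((norm (T k x))\<^sup>2 + cmod (cinner (T k (T k x)) x))
          \<le> w * (1 + r\<^sup>2 * (norm (T k x))\<^sup>2)" if "k < d" for k
    using norm_power2_add_cmod_cinner_square_le [of "T k" w r x]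
      cmod_cinner_le_euclid_op_radius [OF ops that] ops that r x
    by (simp add: bounded_clinear_op_def w_def)
  have "r * (\<Sum>k<d. (norm (T k x))\<^sup>2 + cmod (cinner (T k (T k x)) x))
      \<le> (\<Sum>k<d. w * (1 + r\<^sup>2 * (norm (T k x))\<^sup>2))"
    unfolding sum_distrib_left by (intro sum_mono per_operator) simp
  moreover have "joint_crawford d (op_tuple_sq T) \<le> (\<Sum>k<d. cmod (cinner (T k (T k x)) x))"
    using joint_crawford_le_sum_cmod_cinner [OF x, of d "op_tuple_sq T"]
    by (simp add: op_tuple_sq_def)
  then have "r * joint_crawford d (op_tuple_sq T) \<le> r * (\<Sum>k<d. cmod (cinner (T k (T k x)) x))"
    using r by (simp add: mult_left_mono)
  ultimately show ?thesis
    unfolding joint_norm_at_power2 w_def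
    by (simp add: sum.distrib sum_distrib_left [symmetric] distrib_left mult.commute)
qed

lemma joint_op_norm_nonneg:
  assumes "{x::'a. norm x = 1} \<noteq> {}" and "\<forall>k<d. bounded_clinear_op (T k)"
  shows "0 \<le> joint_op_norm d (T :: nat \<Rightarrow> 'a::complex_hilbert \<Rightarrow> 'a)"
proof -
  obtain x :: 'a where "norm x = 1" using assms(1) by blast
  then have "joint_norm_at d T x \<le> joint_op_norm d T"
    unfolding joint_op_norm_eq_SUP using bdd_above_joint_norm_at [OF assms(2)]
    by (intro cSUP_upper) auto
  then show ?thesis using joint_norm_at_nonneg [of d T x] by linarith
qed

lemma joint_op_norm_0:
  "{x::'a. norm x = 1} \<noteq> {} \<Longrightarrow> joint_op_norm 0 (T :: nat \<Rightarrow> 'a::complex_hilbert \<Rightarrow> 'a) = 0"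
  by (simp add: joint_op_norm_eq_SUP joint_norm_at_def)

theorem theorem2p4:
  fixes d :: nat and T :: "nat \<Rightarrow> 'a::complex_hilbert \<Rightarrow> 'a"
  assumes "\<exists>x::'a. x \<noteq> 0"
    and "\<forall>k<d. bounded_clinear_op (T k)"
    and "joint_op_norm d T \<noteq> 0"
  shows "1 / (2 * sqrt (real d)) *
           (joint_op_norm d T + joint_crawford d (op_tuple_sq T) / joint_op_norm d T)
         \<le> euclid_op_radius d T"
proof -
  define N where "N = joint_op_norm d T"
  define c where "c = joint_crawford d (op_tuple_sq T)"
  define w where "w = euclid_op_radius d T"
  have sphere: "{x::'a. norm x = 1} \<noteq> {}" using unit_sphere_nonempty [OF assms(1)] .
  have "N > 0" using joint_op_norm_nonneg [OF sphere assms(2)] assms(3) by (simp add: N_def)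
  have "d > 0" using joint_op_norm_0 [OF sphere, of T] assms(3) by (cases d) auto
  define r where "r = sqrt (real d) / N"
  have "r > 0" using \<open>d > 0\<close> \<open>N > 0\<close> by (simp add: r_def)
  have "r * c - w * real d \<le> (w * r\<^sup>2 - r) * N\<^sup>2"
    unfolding N_def joint_op_norm_eq_SUP
  proof (rule le_mult_SUP_power2 [OF sphere bdd_above_joint_norm_at [OF assms(2)]])
    show "0 \<le> joint_norm_at d T x" for x by (rule joint_norm_at_nonneg)
    show "r * c - w * real d \<le> (w * r\<^sup>2 - r) * (joint_norm_at d T x)\<^sup>2"
      if "x \<in> {x. norm x = 1}" for x
      using joint_norm_at_crawford_le_euclid_op_radius [OF assms(2) _ \<open>r > 0\<close>, of x] that
      by (simp add: c_def w_def algebra_simps)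
  qed
  also have "\<dots> = w * real d - sqrt (real d) * N"
    using \<open>N > 0\<close> by (simp add: r_def power_divide power2_eq_square field_simps)
  finally have "sqrt (real d) * (N + c / N) \<le> 2 * w * real d"
    using \<open>N > 0\<close> by (simp add: r_def field_simps)
  also have "\<dots> = sqrt (real d) * (2 * sqrt (real d) * w)"
    by (simp add: algebra_simps)
  finally have "N + c / N \<le> 2 * sqrt (real d) * w"
    using \<open>d > 0\<close> by (simp add: mult_le_cancel_left_pos)
  then show ?thesis
    using \<open>d > 0\<close> by (simp add: N_def c_def w_def field_simps)
qed

end
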